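(* Let $H$ be a group and let $A$ be either the empty set or a normal subgroup of $H$. For $1\leq l\leq m$ let $\mathcal E_{l,m}$ be the subgroup of $H$ generated by all elements $[x_1,\ldots,x_i]^{2^{m-i-k}}$ with $l\leq i\leq m$, $x_1,\ldots,x_i\in H$, $0\leq k\leq m-i$, such that there exist indices $1\leq j_1<\cdots<j_k\leq i$ with $x_{j_1},\ldots,x_{j_k}\in A$ (call these elements generators of $\mathcal E_{l,m}$); when $A=\varnothing$ (so only $k=0$ occurs) write $\widetilde{\mathcal E}_{l,m}$. Let $m\geq1$, $1\leq i\leq m$, $y\in H$, and let $x=[x_1,\ldots,x_i]\in\Gamma_i(H)$ be such that $x^{2^{m-i-k}}$ is a generator of $\mathcal E_{i,m}$ for some $0\leq k\leq m-i$. Then $$[x^{2^{m-i-k}},y]\equiv [x,y]^{2^{m-i-k}}\pmod{\mathcal E_{i+1,m+1}}.$$ In particular, if $x^{2^{m-i}}$ is a generator of $\widetilde{\mathcal E}_{i,m}$, then $[x^{2^{m-i}},y]\equiv[x,y]^{2^{m-i}}\pmod{\widetilde{\mathcal E}_{i+1,m+1}}$.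
   Context: $[a,b]=aba^{-1}b^{-1}$; right-normed iterated commutators $[x_1,\ldots,x_n]=[x_1,[x_2,\ldots,[x_{n-1},x_n]]]$ (with $[x_1]=x_1$); $\Gamma_1(H)=H$, $\Gamma_{i+1}(H)=[\Gamma_i(H),H]$. Each $\mathcal E_{l,m}$ is normal in $H$. Congruence modulo a normal subgroup $N$ means equality of $N$-cosets. *)

theory Defs
  imports "HOL-Algebra.Algebra"
begin

definition gcomm :: "('a, 'b) monoid_scheme \<Rightarrow> 'a \<Rightarrow> 'a \<Rightarrow> 'a" where
  "gcomm G a b = a \<otimes>\<^bsub>G\<^esub> b \<otimes>\<^bsub>G\<^esub> inv\<^bsub>G\<^esub> a \<otimes>\<^bsub>G\<^esub> inv\<^bsub>G\<^esub> b"

text \<open>Right-normed iterated commutator [x1,...,xn] = [x1,[x2,...,[x(n-1),xn]]], [x1] = x1.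
  (The value on the empty list is irrelevant; it is never used.)\<close>
fun rcomm :: "('a, 'b) monoid_scheme \<Rightarrow> 'a list \<Rightarrow> 'a" where
  "rcomm G [] = \<one>\<^bsub>G\<^esub>"
| "rcomm G [x] = x"
| "rcomm G (x # xs) = gcomm G x (rcomm G xs)"

text \<open>Generators of E_{l,m}: [x1,...,xi]^(2^(m-i-k)) with l <= i <= m, k <= m-i and
  k distinct positions (0-indexed) whose entries lie in A.\<close>
definition Egens :: "('a, 'b) monoid_scheme \<Rightarrow> 'a set \<Rightarrow> nat \<Rightarrow> nat \<Rightarrow> 'a set" where
  "Egens G A l m = {rcomm G xs [^]\<^bsub>G\<^esub> ((2::nat) ^ (m - length xs - k)) | xs k.
      l \<le> length xs \<and> length xs \<le> m \<and> set xs \<subseteq> carrier G \<and> k \<le> m - length xs \<and>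
      (\<exists>J. J \<subseteq> {0..<length xs} \<and> card J = k \<and> (\<forall>j\<in>J. xs ! j \<in> A))}"

definition Egrp :: "('a, 'b) monoid_scheme \<Rightarrow> 'a set \<Rightarrow> nat \<Rightarrow> nat \<Rightarrow> 'a set" where
  "Egrp G A l m = generate G (Egens G A l m)"

end

theory Submission
  imports Defs
begin

text \<open>
  Write \<open>e = m - i - k\<close> and \<open>E = E\<^sub>i\<^sub>+\<^sub>1\<^sub>,\<^sub>m\<^sub>+\<^sub>1\<close>. The right-hand side
  \<open>[x,y]^(2^e)\<close> is the inverse of \<open>[y,x\<^sub>1,\<dots>,x\<^sub>i]^(2^e)\<close>, itself a generator of \<open>E\<close>,
  so the congruence amounts to \<open>[y, x^(2^e)] \<in> E\<close>. This follows from a general fact about a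
  family of conjugation-invariant sets \<open>C\<^sub>s\<close> with \<open>[G, C\<^sub>s] \<subseteq> C\<^sub>s\<^sub>+\<^sub>1\<close>: for \<open>c \<in> C\<^sub>t\<close>,
  \<open>[g, c^(2^a)]\<close> lies in the subgroup generated by the \<open>q^(2^b)\<close> with \<open>q \<in> C\<^sub>s\<close>,
  \<open>s > t\<close>, \<open>b \<le> a\<close> and \<open>s + b > t + a\<close>. It is proved by induction on \<open>a\<close>, using
  \<open>[g, p\<^sup>2] = v [p,v] v\<close> for \<open>v = [g,p]\<close> and \<open>(uv)\<^sup>2 = u\<^sup>2 [u\<^sup>-\<^sup>1,v] v\<^sup>2\<close>.
  For \<open>C\<^sub>s\<close> the commutators \<open>[z\<^sub>1,\<dots>,z\<^sub>s,w\<^sub>1,\<dots>,w\<^sub>i]\<close> whose last \<open>i\<close> entries have the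
  \<open>A\<close>-pattern of \<open>x\<close>, these generators are powers of generators of \<open>E\<close> or, for long
  commutators, elements of \<open>E\<close>.
\<close>

context group
begin

lemma mult_inv_cancel_left [simp]: "x \<in> carrier G \<Longrightarrow> y \<in> carrier G \<Longrightarrow> x \<otimes> (inv x \<otimes> y) = y"
  by (simp add: m_assoc [symmetric])

lemma inv_mult_cancel_left [simp]: "x \<in> carrier G \<Longrightarrow> y \<in> carrier G \<Longrightarrow> inv x \<otimes> (x \<otimes> y) = y"
  by (simp add: m_assoc [symmetric])

lemma gcomm_closed [simp]: "a \<in> carrier G \<Longrightarrow> b \<in> carrier G \<Longrightarrow> gcomm G a b \<in> carrier G"
  by (simp add: gcomm_def)

lemma inv_gcomm: "a \<in> carrier G \<Longrightarrow> b \<in> carrier G \<Longrightarrow> inv (gcomm G a b) = gcomm G b a"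
  by (simp add: gcomm_def m_assoc inv_mult_group)

lemma gcomm_one_right [simp]: "a \<in> carrier G \<Longrightarrow> gcomm G a \<one> = \<one>"
  by (simp add: gcomm_def)

lemma gcomm_mem_normal: "N \<lhd> G \<Longrightarrow> a \<in> carrier G \<Longrightarrow> b \<in> N \<Longrightarrow> gcomm G a b \<in> N"
  unfolding gcomm_def
  by (meson normal.inv_op_closed2 normal_imp_subgroup subgroup.m_closed subgroup.m_inv_closed)

lemma conj_gcomm: "g \<in> carrier G \<Longrightarrow> a \<in> carrier G \<Longrightarrow> b \<in> carrier G \<Longrightarrow>
    g \<otimes> gcomm G a b \<otimes> inv g = gcomm G (g \<otimes> a \<otimes> inv g) (g \<otimes> b \<otimes> inv g)"
  by (simp add: gcomm_def m_assoc inv_mult_group)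

lemma gcomm_mult_right: "h \<in> carrier G \<Longrightarrow> a \<in> carrier G \<Longrightarrow> b \<in> carrier G \<Longrightarrow>
    gcomm G h (a \<otimes> b) = gcomm G h a \<otimes> (a \<otimes> gcomm G h b \<otimes> inv a)"
  by (simp add: gcomm_def m_assoc inv_mult_group)

lemma gcomm_inv_right: "h \<in> carrier G \<Longrightarrow> a \<in> carrier G \<Longrightarrow>
    gcomm G h (inv a) = inv a \<otimes> inv (gcomm G h a) \<otimes> inv (inv a)"
  by (simp add: gcomm_def m_assoc inv_mult_group)

lemma square_mult: "a \<in> carrier G \<Longrightarrow> b \<in> carrier G \<Longrightarrow>
    (a \<otimes> b) \<otimes> (a \<otimes> b) = (a \<otimes> a) \<otimes> gcomm G (inv a) b \<otimes> (b \<otimes> b)"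
  by (simp add: gcomm_def m_assoc inv_mult_group)

lemma gcomm_square_right: "g \<in> carrier G \<Longrightarrow> p \<in> carrier G \<Longrightarrow>
    gcomm G g (p \<otimes> p)
      = gcomm G g p \<otimes> (gcomm G p (gcomm G g p) \<otimes> (gcomm G g p \<otimes> gcomm G g p)) \<otimes> inv (gcomm G g p)"
  by (simp add: gcomm_def m_assoc inv_mult_group)

lemma conj_nat_pow:
  assumes "g \<in> carrier G" "x \<in> carrier G"
  shows "g \<otimes> x [^] (n::nat) \<otimes> inv g = (g \<otimes> x \<otimes> inv g) [^] n"
proof (induction n)
  case 0
  then show ?case using assms by simp
next
  case (Suc n)
  have "(g \<otimes> x \<otimes> inv g) [^] Suc n = (g \<otimes> x [^] n \<otimes> inv g) \<otimes> (g \<otimes> x \<otimes> inv g)"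
    by (simp only: nat_pow_Suc Suc.IH)
  also have "\<dots> = g \<otimes> x [^] Suc n \<otimes> inv g"
    using assms by (simp add: m_assoc)
  finally show ?case by simp
qed

lemma nat_pow_2_Suc: "x \<in> carrier G \<Longrightarrow> x [^] ((2::nat) ^ Suc n) = x [^] ((2::nat) ^ n) \<otimes> x [^] ((2::nat) ^ n)"
  by (metis mult_2 nat_pow_mult power_Suc)

lemma subgroup_nat_pow_closed: "subgroup H G \<Longrightarrow> x \<in> H \<Longrightarrow> x [^] (n::nat) \<in> H"
  by (induction n) (auto simp: subgroup.one_closed subgroup.m_closed)

lemma rcomm_closed: "set xs \<subseteq> carrier G \<Longrightarrow> rcomm G xs \<in> carrier G"
  by (induction xs rule: induct_list012) auto

lemma rcomm_Cons: "xs \<noteq> [] \<Longrightarrow> rcomm G (x # xs) = gcomm G x (rcomm G xs)"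
  by (cases xs) auto

lemma conj_rcomm: "g \<in> carrier G \<Longrightarrow> set xs \<subseteq> carrier G \<Longrightarrow>
    g \<otimes> rcomm G xs \<otimes> inv g = rcomm G (map (\<lambda>z. g \<otimes> z \<otimes> inv g) xs)"
  by (induction xs rule: induct_list012) (simp_all add: conj_gcomm rcomm_closed)

end

locale commutator_family = group +
  fixes C :: "nat \<Rightarrow> 'a set"
  assumes C_closed: "C s \<subseteq> carrier G"
    and conj_mem_C: "g \<in> carrier G \<Longrightarrow> c \<in> C s \<Longrightarrow> g \<otimes> c \<otimes> inv g \<in> C s"
    and gcomm_mem_C_Suc: "g \<in> carrier G \<Longrightarrow> c \<in> C s \<Longrightarrow> gcomm G g c \<in> C (Suc s)"
begin

definition pow_gens :: "nat \<Rightarrow> nat \<Rightarrow> 'a set" where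
  "pow_gens t a = {q [^] ((2::nat) ^ b) | q s b. q \<in> C s \<and> t \<le> s \<and> b \<le> a \<and> t + a \<le> s + b}"

abbreviation pow_subgroup :: "nat \<Rightarrow> nat \<Rightarrow> 'a set" where
  "pow_subgroup t a \<equiv> generate G (pow_gens t a)"

lemma pow_gens_closed: "pow_gens t a \<subseteq> carrier G"
  using C_closed unfolding pow_gens_def by auto

lemma conj_mem_pow_gens:
  assumes g: "g \<in> carrier G" and u: "u \<in> pow_gens t a"
  shows "g \<otimes> u \<otimes> inv g \<in> pow_gens t a"
proof -
  obtain q s b where q: "u = q [^] ((2::nat) ^ b)" "q \<in> C s" "t \<le> s" "b \<le> a" "t + a \<le> s + b"
    using u unfolding pow_gens_def by blast
  have "g \<otimes> u \<otimes> inv g = (g \<otimes> q \<otimes> inv g) [^] ((2::nat) ^ b)"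
    using q(1,2) C_closed g by (simp add: conj_nat_pow subset_iff)
  then show ?thesis
    using conj_mem_C[OF g q(2)] q(3-5) unfolding pow_gens_def by blast
qed

lemma pow_subgroup_normal: "pow_subgroup t a \<lhd> G"
  by (rule normal_generateI[OF pow_gens_closed conj_mem_pow_gens])

lemma pow_subgroup_subgroup: "subgroup (pow_subgroup t a) G"
  by (rule normal_imp_subgroup[OF pow_subgroup_normal])

lemma pow_subgroup_closed: "u \<in> pow_subgroup t a \<Longrightarrow> u \<in> carrier G"
  using generate_in_carrier[OF pow_gens_closed] by blast

lemma pow_gens_mono:
  "t \<le> s \<Longrightarrow> b \<le> a \<Longrightarrow> t + a \<le> s + b \<Longrightarrow> pow_gens (Suc s) b \<subseteq> pow_gens t (Suc a)"
  unfolding pow_gens_def by fastforce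

lemma square_mem_pow_gens: "w \<in> pow_gens t a \<Longrightarrow> w \<otimes> w \<in> pow_gens t (Suc a)"
proof -
  assume "w \<in> pow_gens t a"
  then obtain q s b where q: "w = q [^] ((2::nat) ^ b)" "q \<in> C s" "t \<le> s" "b \<le> a" "t + a \<le> s + b"
    unfolding pow_gens_def by blast
  have "w \<otimes> w = q [^] ((2::nat) ^ Suc b)"
    unfolding q(1) using q(2) C_closed by (metis nat_pow_2_Suc subsetD)
  then show ?thesis
    using q(2-5) unfolding pow_gens_def by (intro CollectI exI[of _ q] exI[of _ s] exI[of _ "Suc b"]) auto
qed

lemma gcomm_mem_pow_subgroup_Suc:
  assumes IH: "\<And>b t c g. b \<le> a \<Longrightarrow> c \<in> C t \<Longrightarrow> g \<in> carrier G \<Longrightarrow>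
      gcomm G g (c [^] ((2::nat) ^ b)) \<in> pow_subgroup (Suc t) b"
    and h: "h \<in> carrier G" and v: "v \<in> pow_subgroup t a"
  shows "gcomm G h v \<in> pow_subgroup t (Suc a)"
proof -
  note conj_closed = normal.inv_op_closed2[OF pow_subgroup_normal]
  have gen: "gcomm G h w \<in> pow_subgroup t (Suc a)" if w: "w \<in> pow_gens t a" for w
  proof -
    obtain q s b where q: "w = q [^] ((2::nat) ^ b)" "q \<in> C s" "t \<le> s" "b \<le> a" "t + a \<le> s + b"
      using w unfolding pow_gens_def by blast
    have "gcomm G h w \<in> pow_subgroup (Suc s) b"
      using IH[OF q(4,2) h] q(1) by simp
    then show ?thesis
      using mono_generate[OF pow_gens_mono[OF q(3-5)]] by blast
  qed
  show ?thesis
    using v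
  proof induction
    case one
    then show ?case using h by (simp add: generate.one)
  next
    case (incl w)
    then show ?case by (rule gen)
  next
    case (inv w)
    have w: "w \<in> carrier G" using inv pow_gens_closed by auto
    have "inv (gcomm G h w) \<in> pow_subgroup t (Suc a)"
      using subgroup.m_inv_closed[OF pow_subgroup_subgroup gen[OF inv]] .
    then show ?case
      using conj_closed[OF inv_closed[OF w]] gcomm_inv_right[OF h w] by simp
  next
    case (eng v1 v2)
    have v: "v1 \<in> carrier G" "v2 \<in> carrier G" using eng pow_subgroup_closed by auto
    have "gcomm G h v1 \<otimes> (v1 \<otimes> gcomm G h v2 \<otimes> inv v1) \<in> pow_subgroup t (Suc a)"
      using subgroup.m_closed[OF pow_subgroup_subgroup eng(3) conj_closed[OF v(1) eng(4)]] .
    then show ?case using gcomm_mult_right[OF h v] by simp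
  qed
qed

lemma square_mem_pow_subgroup_Suc:
  assumes IH: "\<And>b t c g. b \<le> a \<Longrightarrow> c \<in> C t \<Longrightarrow> g \<in> carrier G \<Longrightarrow>
      gcomm G g (c [^] ((2::nat) ^ b)) \<in> pow_subgroup (Suc t) b"
    and v: "v \<in> pow_subgroup t a"
  shows "v \<otimes> v \<in> pow_subgroup t (Suc a)"
  using v
proof induction
  case one
  then show ?case by (simp add: generate.one)
next
  case (incl w)
  then show ?case by (rule generate.incl[OF square_mem_pow_gens])
next
  case (inv w)
  have "w \<in> carrier G" using inv pow_gens_closed by auto
  then show ?case
    using subgroup.m_inv_closed[OF pow_subgroup_subgroup generate.incl[OF square_mem_pow_gens[OF inv]]]
    by (simp add: inv_mult_group)
next
  case (eng v1 v2)
  have v: "v1 \<in> carrier G" "v2 \<in> carrier G" using eng pow_subgroup_closed by auto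
  have "gcomm G (inv v1) v2 \<in> pow_subgroup t (Suc a)"
    using gcomm_mem_pow_subgroup_Suc[OF IH _ eng(2)] v by simp
  then have "(v1 \<otimes> v1) \<otimes> gcomm G (inv v1) v2 \<otimes> (v2 \<otimes> v2) \<in> pow_subgroup t (Suc a)"
    using eng(3,4) subgroup.m_closed[OF pow_subgroup_subgroup] by blast
  then show ?case using square_mult[OF v] by simp
qed

lemma gcomm_pow2_mem_pow_subgroup:
  "c \<in> C t \<Longrightarrow> g \<in> carrier G \<Longrightarrow> gcomm G g (c [^] ((2::nat) ^ a)) \<in> pow_subgroup (Suc t) a"
proof (induction a arbitrary: t c g rule: less_induct)
  case (less a)
  have c: "c \<in> carrier G" using less.prems C_closed by auto
  show ?case
  proof (cases a)
    case 0
    have "gcomm G g c \<in> pow_gens (Suc t) 0"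
      using gcomm_mem_C_Suc[OF less.prems(2,1)] less.prems c unfolding pow_gens_def
      by (intro CollectI exI[of _ "gcomm G g c"] exI[of _ "Suc t"] exI[of _ 0]) simp
    then show ?thesis using 0 c by (simp add: generate.incl)
  next
    case (Suc b)
    have IH: "\<And>b' t c g. b' \<le> b \<Longrightarrow> c \<in> C t \<Longrightarrow> g \<in> carrier G \<Longrightarrow>
        gcomm G g (c [^] ((2::nat) ^ b')) \<in> pow_subgroup (Suc t) b'"
      using less.IH Suc by simp
    define p where "p = c [^] ((2::nat) ^ b)"
    define v where "v = gcomm G g p"
    have p: "p \<in> carrier G" using c p_def by simp
    have v: "v \<in> pow_subgroup (Suc t) b" using IH[OF _ less.prems] v_def p_def by simp
    have "gcomm G p v \<otimes> (v \<otimes> v) \<in> pow_subgroup (Suc t) a"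
      using subgroup.m_closed[OF pow_subgroup_subgroup
          gcomm_mem_pow_subgroup_Suc[OF IH p v] square_mem_pow_subgroup_Suc[OF IH v]] Suc by simp
    \<comment> \<open>\<open>v\<close> itself need not lie in this subgroup, only \<open>[p,v]\<close> and \<open>v\<^sup>2\<close> do; it is normal.\<close>
    then have "v \<otimes> (gcomm G p v \<otimes> (v \<otimes> v)) \<otimes> inv v \<in> pow_subgroup (Suc t) a"
      using normal.inv_op_closed2[OF pow_subgroup_normal] v pow_subgroup_closed by blast
    then show ?thesis
      using gcomm_square_right[OF less.prems(2) p] nat_pow_2_Suc[OF c] Suc
      unfolding p_def v_def by simp
  qed
qed

end

lemma (in group) Egens_closed: "Egens G A l m \<subseteq> carrier G"
  unfolding Egens_def using rcomm_closed nat_pow_closed by blast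

lemma (in group) conj_mem_Egens:
  assumes A: "A = {} \<or> A \<lhd> G" and g: "g \<in> carrier G" and u: "u \<in> Egens G A l m"
  shows "g \<otimes> u \<otimes> inv g \<in> Egens G A l m"
proof -
  obtain xs k J where xs: "u = rcomm G xs [^] ((2::nat) ^ (m - length xs - k))"
    "l \<le> length xs" "length xs \<le> m" "set xs \<subseteq> carrier G" "k \<le> m - length xs"
    "J \<subseteq> {0..<length xs}" "card J = k" "\<forall>j\<in>J. xs ! j \<in> A"
    using u unfolding Egens_def by blast
  define ys where "ys = map (\<lambda>z. g \<otimes> z \<otimes> inv g) xs"
  have "g \<otimes> u \<otimes> inv g = rcomm G ys [^] ((2::nat) ^ (m - length ys - k))"
    using xs(1,4) g by (simp add: ys_def conj_nat_pow conj_rcomm rcomm_closed)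
  moreover have "length ys = length xs" "set ys \<subseteq> carrier G"
    using xs(4) g by (auto simp: ys_def)
  moreover have "\<forall>j\<in>J. ys ! j \<in> A"
    using xs(6,8) A g normal.inv_op_closed2 by (fastforce simp: ys_def)
  ultimately show ?thesis
    using xs(2,3,5-7) unfolding Egens_def by (intro CollectI exI[of _ ys] exI[of _ k]) auto
qed

lemma (in group) Egrp_normal: "A = {} \<or> A \<lhd> G \<Longrightarrow> Egrp G A l m \<lhd> G"
  unfolding Egrp_def by (rule normal_generateI[OF Egens_closed conj_mem_Egens])

definition tail_pattern_comms :: "('a, 'b) monoid_scheme \<Rightarrow> 'a set \<Rightarrow> nat set \<Rightarrow> nat \<Rightarrow> nat \<Rightarrow> 'a set"
  where "tail_pattern_comms G A J i s = {rcomm G (zs @ ws) | zs ws.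
    length zs = s \<and> length ws = i \<and> set (zs @ ws) \<subseteq> carrier G \<and> (\<forall>j\<in>J. ws ! j \<in> A)}"

lemma tail_pattern_comms_pow_mem_Egens:
  assumes J: "J \<subseteq> {0..<i}" "card J = k"
    and q: "q \<in> tail_pattern_comms G A J i s" and s: "1 \<le> s" "s + i + k \<le> M"
  shows "q [^]\<^bsub>G\<^esub> ((2::nat) ^ (M - (s + i) - k)) \<in> Egens G A (i + 1) M"
proof -
  obtain zs ws where zs: "q = rcomm G (zs @ ws)" "length zs = s" "length ws = i"
      "set (zs @ ws) \<subseteq> carrier G" "\<forall>j\<in>J. ws ! j \<in> A"
    using q unfolding tail_pattern_comms_def by blast
  define J' where "J' = (\<lambda>j. j + s) ` J"
  have "J' \<subseteq> {0..<length (zs @ ws)}" "card J' = k" "\<forall>j\<in>J'. (zs @ ws) ! j \<in> A"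
    using J zs(2,3,5) by (auto simp: J'_def card_image nth_append)
  then show ?thesis
    using zs(1-4) s unfolding Egens_def
    by (intro CollectI exI[of _ "zs @ ws"] exI[of _ k]) auto
qed

locale tail_pattern = group +
  fixes A :: "'a set" and J :: "nat set" and i :: nat
  assumes A_normal: "A = {} \<or> A \<lhd> G"
    and J_subset: "J \<subseteq> {0..<i}"
    and i_pos: "1 \<le> i"
begin

lemma conj_mem_tail_pattern_comms:
  assumes g: "g \<in> carrier G" and c: "c \<in> tail_pattern_comms G A J i s"
  shows "g \<otimes> c \<otimes> inv g \<in> tail_pattern_comms G A J i s"
proof -
  obtain zs ws where zs: "c = rcomm G (zs @ ws)" "length zs = s" "length ws = i"
      "set (zs @ ws) \<subseteq> carrier G" "\<forall>j\<in>J. ws ! j \<in> A"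
    using c unfolding tail_pattern_comms_def by blast
  define f where "f = (\<lambda>z. g \<otimes> z \<otimes> inv g)"
  have "g \<otimes> c \<otimes> inv g = rcomm G (map f zs @ map f ws)"
    using conj_rcomm[OF g zs(4)] zs(1) by (simp add: f_def)
  moreover have "length (map f zs) = s" "length (map f ws) = i"
    using zs(2,3) by simp_all
  moreover have "set (map f zs @ map f ws) \<subseteq> carrier G"
    using zs(4) g by (auto simp: f_def)
  moreover have "\<forall>j\<in>J. map f ws ! j \<in> A"
    using zs(3,5) J_subset A_normal g normal.inv_op_closed2 by (fastforce simp: f_def)
  ultimately show ?thesis
    unfolding tail_pattern_comms_def by blast
qed

lemma tail_pattern_comms_Suc_iff:
  "c \<in> tail_pattern_comms G A J i (Suc s)
     \<longleftrightarrow> (\<exists>z\<in>carrier G. \<exists>c'\<in>tail_pattern_comms G A J i s. c = gcomm G z c')"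
    (is "?lhs \<longleftrightarrow> ?rhs")
proof -
  have rcomm_prepend: "rcomm G (z # zs @ ws) = gcomm G z (rcomm G (zs @ ws))"
    if "length ws = i" for z zs ws
    using that i_pos by (intro rcomm_Cons) auto
  show ?thesis
  proof
    assume ?lhs
    then obtain z zs ws where zs: "c = rcomm G (z # zs @ ws)" "length zs = s" "length ws = i"
        "set (z # zs @ ws) \<subseteq> carrier G" "\<forall>j\<in>J. ws ! j \<in> A"
      unfolding tail_pattern_comms_def by (auto simp: length_Suc_conv)
    then have "rcomm G (zs @ ws) \<in> tail_pattern_comms G A J i s"
      unfolding tail_pattern_comms_def by auto
    then show ?rhs
      using zs rcomm_prepend by auto
  next
    assume ?rhs
    then obtain z zs ws where zs: "c = gcomm G z (rcomm G (zs @ ws))" "z \<in> carrier G"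
        "length zs = s" "length ws = i" "set (zs @ ws) \<subseteq> carrier G" "\<forall>j\<in>J. ws ! j \<in> A"
      unfolding tail_pattern_comms_def by auto
    then have "c = rcomm G ((z # zs) @ ws)" "set ((z # zs) @ ws) \<subseteq> carrier G"
        "length (z # zs) = Suc s"
      using rcomm_prepend by auto
    then show ?lhs
      using zs(4,6) unfolding tail_pattern_comms_def by blast
  qed
qed

sublocale commutator_family G "tail_pattern_comms G A J i"
proof
  show "tail_pattern_comms G A J i s \<subseteq> carrier G" for s
    unfolding tail_pattern_comms_def using rcomm_closed by blast
next
  show "g \<otimes> c \<otimes> inv g \<in> tail_pattern_comms G A J i s"
    if "g \<in> carrier G" "c \<in> tail_pattern_comms G A J i s" for g c s
    using conj_mem_tail_pattern_comms[OF that] .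
next
  show "gcomm G g c \<in> tail_pattern_comms G A J i (Suc s)"
    if "g \<in> carrier G" "c \<in> tail_pattern_comms G A J i s" for g c s
    using tail_pattern_comms_Suc_iff that by blast
qed

lemma Egrp_subgroup: "subgroup (Egrp G A l M) G"
  by (rule normal_imp_subgroup[OF Egrp_normal[OF A_normal]])

lemma tail_pattern_comms_mem_Egrp:
  assumes M: "i + card J < M" "M \<le> s + i + card J" and q: "q \<in> tail_pattern_comms G A J i s"
  shows "q \<in> Egrp G A (i + 1) M"
proof -
  have "M - (i + card J) \<le> s" using M by simp
  then show ?thesis
    using q
  proof (induction s arbitrary: q rule: nat_induct_at_least)
    case base
    let ?s = "M - (i + card J)"
    have "1 \<le> ?s" "?s + i + card J \<le> M" "M - (?s + i) - card J = 0"
      using M(1) by simp_all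
    then have "q [^] ((2::nat) ^ 0) \<in> Egens G A (i + 1) M"
      using tail_pattern_comms_pow_mem_Egens[OF J_subset refl base] by metis
    moreover have "q \<in> carrier G"
      using base C_closed by blast
    ultimately show ?case
      unfolding Egrp_def by (auto intro: generate.incl)
  next
    case (Suc s)
    then obtain z c where "z \<in> carrier G" "c \<in> tail_pattern_comms G A J i s" "q = gcomm G z c"
      using tail_pattern_comms_Suc_iff by blast
    then show ?case
      using Suc.IH gcomm_mem_normal[OF Egrp_normal[OF A_normal]] by blast
  qed
qed

lemma tail_pattern_comms_pow_mem_Egrp:
  assumes M: "i + card J < M" "M \<le> s + b + i + card J"
    and s: "1 \<le> s" and q: "q \<in> tail_pattern_comms G A J i s"
  shows "q [^] ((2::nat) ^ b) \<in> Egrp G A (i + 1) M"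
proof (cases "s + i + card J \<le> M")
  case True
  define d where "d = M - (s + i) - card J"
  have "q [^] ((2::nat) ^ d) \<in> Egrp G A (i + 1) M"
    using tail_pattern_comms_pow_mem_Egens[OF J_subset refl q s True]
    unfolding d_def Egrp_def by (rule generate.incl)
  then have "(q [^] ((2::nat) ^ d)) [^] ((2::nat) ^ (b - d)) \<in> Egrp G A (i + 1) M"
    by (rule subgroup_nat_pow_closed[OF Egrp_subgroup])
  moreover have "(2::nat) ^ d * 2 ^ (b - d) = 2 ^ b"
    using M by (simp add: d_def power_add[symmetric])
  moreover have "q \<in> carrier G"
    using q C_closed by blast
  ultimately show ?thesis
    by (metis nat_pow_pow)
next
  case False
  then have "q \<in> Egrp G A (i + 1) M"
    using tail_pattern_comms_mem_Egrp[OF M(1) _ q] by simp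
  then show ?thesis
    by (rule subgroup_nat_pow_closed[OF Egrp_subgroup])
qed

lemma pow_subgroup_subset_Egrp:
  assumes M: "i + card J < M"
  shows "pow_subgroup 1 (M - (i + 1) - card J) \<subseteq> Egrp G A (i + 1) M"
proof (rule generate_subgroup_incl[OF _ Egrp_subgroup])
  show "pow_gens 1 (M - (i + 1) - card J) \<subseteq> Egrp G A (i + 1) M"
  proof
    fix u
    assume "u \<in> pow_gens 1 (M - (i + 1) - card J)"
    then obtain q s b where q: "u = q [^] ((2::nat) ^ b)" "q \<in> tail_pattern_comms G A J i s"
        "1 \<le> s" "1 + (M - (i + 1) - card J) \<le> s + b"
      unfolding pow_gens_def by blast
    then show "u \<in> Egrp G A (i + 1) M"
      using tail_pattern_comms_pow_mem_Egrp[of M s b q] M by simp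
  qed
qed

lemma Egrp_rcoset_gcomm_pow_eq:
  assumes m: "i + card J \<le> m" and xs: "length xs = i" "set xs \<subseteq> carrier G" "\<forall>j\<in>J. xs ! j \<in> A"
    and y: "y \<in> carrier G"
  shows "Egrp G A (i + 1) (m + 1) #> gcomm G (rcomm G xs [^] ((2::nat) ^ (m - i - card J))) y
       = Egrp G A (i + 1) (m + 1) #> (gcomm G (rcomm G xs) y [^] ((2::nat) ^ (m - i - card J)))"
proof -
  define N where "N = Egrp G A (i + 1) (m + 1)"
  define e where "e = m - i - card J"
  define x where "x = rcomm G xs"
  have N: "subgroup N G"
    unfolding N_def by (rule Egrp_subgroup)
  have x: "x \<in> carrier G" "x \<in> tail_pattern_comms G A J i 0"
    using xs rcomm_closed unfolding x_def tail_pattern_comms_def by auto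
  have "gcomm G y (x [^] ((2::nat) ^ e)) \<in> N"
    using gcomm_pow2_mem_pow_subgroup[OF x(2) y] pow_subgroup_subset_Egrp[of "m + 1"] m
    unfolding N_def e_def by auto
  then have lhs: "gcomm G (x [^] ((2::nat) ^ e)) y \<in> N"
    using subgroup.m_inv_closed[OF N] inv_gcomm x(1) y by (metis nat_pow_closed)
  have "gcomm G y x \<in> tail_pattern_comms G A J i 1"
    using tail_pattern_comms_Suc_iff x y by auto
  then have "gcomm G y x [^] ((2::nat) ^ e) \<in> N"
    using tail_pattern_comms_pow_mem_Egrp[of "m + 1" 1 e] m unfolding N_def e_def by simp
  then have rhs: "gcomm G x y [^] ((2::nat) ^ e) \<in> N"
    using subgroup.m_inv_closed[OF N] inv_gcomm[OF y x(1)] nat_pow_inv x(1) y by (metis gcomm_closed)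
  show ?thesis
    using coset_join2[OF _ N lhs] coset_join2[OF _ N rhs] x(1) y
    unfolding N_def e_def x_def by simp
qed

end

theorem lemma5p7:
  fixes G :: "('a, 'b) monoid_scheme" and A :: "'a set"
    and xs :: "'a list" and y :: 'a and m i k :: nat and J :: "nat set"
  assumes "group G"
    and "A = {} \<or> A \<lhd> G"
    and "1 \<le> m" and "1 \<le> i" and "i \<le> m"
    and "y \<in> carrier G"
    and "length xs = i" and "set xs \<subseteq> carrier G"
    and "k \<le> m - i"
    and "J \<subseteq> {0..<i}" and "card J = k" and "\<forall>j\<in>J. xs ! j \<in> A"
  shows "(Egrp G A (i + 1) (m + 1) #>\<^bsub>G\<^esub>
           gcomm G (rcomm G xs [^]\<^bsub>G\<^esub> ((2::nat) ^ (m - i - k))) y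
       = Egrp G A (i + 1) (m + 1) #>\<^bsub>G\<^esub>
           (gcomm G (rcomm G xs) y [^]\<^bsub>G\<^esub> ((2::nat) ^ (m - i - k)))) \<and>
         (Egrp G {} (i + 1) (m + 1) #>\<^bsub>G\<^esub>
           gcomm G (rcomm G xs [^]\<^bsub>G\<^esub> ((2::nat) ^ (m - i))) y
       = Egrp G {} (i + 1) (m + 1) #>\<^bsub>G\<^esub>
           (gcomm G (rcomm G xs) y [^]\<^bsub>G\<^esub> ((2::nat) ^ (m - i))))"
proof -
  interpret pattern: tail_pattern G A J i
    using assms by (simp add: tail_pattern_def tail_pattern_axioms_def group.axioms)
  interpret no_pattern: tail_pattern G "{}" "{}" i
    using assms by (simp add: tail_pattern_def tail_pattern_axioms_def group.axioms)
  show ?thesis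
    using pattern.Egrp_rcoset_gcomm_pow_eq no_pattern.Egrp_rcoset_gcomm_pow_eq assms by simp
qed

end
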